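(* Let $G$ be a connected graph, let $(u,v)\in V_p$, and let $R\subseteq V(G)$ be any resolving set for $G$. (1) If $r_w(u,v)=0$ for all $w\in V(G)\setminus\{u,v\}$, then $u\in R$ or $v\in R$. (2) If $r_w(u,v)=\frac12$ for some $w\in V(G)$, then $u\in R$ or $v\in R$.
   Context: Graphs are finite, simple and connected; $d(u,v)$ denotes the shortest-path distance. $V_p$ denotes the set of all unordered pairs $(u,v)$ of distinct vertices. A vertex $x$ resolves the pair $(u,v)$ if $d(x,u)\neq d(x,v)$. A set $R\subseteq V(G)$ is a resolving set for $G$ if every pair of distinct vertices of $G$ is resolved by some element of $R$. For $(u,v)\in V_p$, $R(u,v)$ is the set of all vertices resolving $(u,v)$. The resolving share of a vertex $w$ for $(u,v)$ is $r_w(u,v)=\frac{1}{|R(u,v)|}$ if $w$ resolves $u$ and $v$, and $r_w(u,v)=0$ otherwise. *)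

theory Defs
  imports Complex_Main
begin

definition simple_graph :: "'a set \<Rightarrow> ('a \<Rightarrow> 'a \<Rightarrow> bool) \<Rightarrow> bool" where
  "simple_graph V E \<longleftrightarrow> finite V \<and> V \<noteq> {} \<and>
     (\<forall>x y. E x y \<longrightarrow> x \<in> V \<and> y \<in> V) \<and>
     (\<forall>x y. E x y \<longrightarrow> E y x) \<and> (\<forall>x. \<not> E x x)"

text \<open>A walk given as its list of vertices (length of walk = number of edges).\<close>

fun is_walk :: "('a \<Rightarrow> 'a \<Rightarrow> bool) \<Rightarrow> 'a list \<Rightarrow> bool" where
  "is_walk E [] = False"
| "is_walk E [x] = True"
| "is_walk E (x # y # xs) = (E x y \<and> is_walk E (y # xs))"

definition walk_betw :: "'a set \<Rightarrow> ('a \<Rightarrow> 'a \<Rightarrow> bool) \<Rightarrow> 'a \<Rightarrow> 'a list \<Rightarrow> 'a \<Rightarrow> bool" where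
  "walk_betw V E u p v \<longleftrightarrow> is_walk E p \<and> set p \<subseteq> V \<and> hd p = u \<and> last p = v"

definition connected_graph :: "'a set \<Rightarrow> ('a \<Rightarrow> 'a \<Rightarrow> bool) \<Rightarrow> bool" where
  "connected_graph V E \<longleftrightarrow> simple_graph V E \<and>
     (\<forall>u\<in>V. \<forall>v\<in>V. \<exists>p. walk_betw V E u p v)"

text \<open>Shortest-path distance (meaningful in a connected graph).\<close>

definition gdist :: "'a set \<Rightarrow> ('a \<Rightarrow> 'a \<Rightarrow> bool) \<Rightarrow> 'a \<Rightarrow> 'a \<Rightarrow> nat" where
  "gdist V E u v = (LEAST n. \<exists>p. walk_betw V E u p v \<and> length p = Suc n)"

definition resolves :: "'a set \<Rightarrow> ('a \<Rightarrow> 'a \<Rightarrow> bool) \<Rightarrow> 'a \<Rightarrow> 'a \<Rightarrow> 'a \<Rightarrow> bool" where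
  "resolves V E x u v \<longleftrightarrow> gdist V E x u \<noteq> gdist V E x v"

definition resolving_set :: "'a set \<Rightarrow> ('a \<Rightarrow> 'a \<Rightarrow> bool) \<Rightarrow> 'a set \<Rightarrow> bool" where
  "resolving_set V E R \<longleftrightarrow> R \<subseteq> V \<and>
     (\<forall>u\<in>V. \<forall>v\<in>V. u \<noteq> v \<longrightarrow> (\<exists>x\<in>R. resolves V E x u v))"

definition resolving_vertices :: "'a set \<Rightarrow> ('a \<Rightarrow> 'a \<Rightarrow> bool) \<Rightarrow> 'a \<Rightarrow> 'a \<Rightarrow> 'a set" where
  "resolving_vertices V E u v = {x \<in> V. resolves V E x u v}"

definition resolving_share :: "'a set \<Rightarrow> ('a \<Rightarrow> 'a \<Rightarrow> bool) \<Rightarrow> 'a \<Rightarrow> 'a \<Rightarrow> 'a \<Rightarrow> real" where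
  "resolving_share V E w u v =
     (if resolves V E w u v then 1 / real (card (resolving_vertices V E u v)) else 0)"

end

theory Submission
  imports Defs
begin

text \<open>The endpoints u and v always resolve themselves (d(u,u) = 0 < d(u,v)), so R(u,v)
  contains {u,v}; and any resolving set R meets R(u,v). Each hypothesis forces
  R(u,v) = {u,v}: in (1) no other vertex resolves, in (2) a share of 1/2 means
  |R(u,v)| = 2. Hence R contains u or v.\<close>

lemma gdist_self: "x \<in> V \<Longrightarrow> gdist V E x x = 0"
  unfolding gdist_def
  by (rule Least_eq_0, rule exI[of _ "[x]"], simp add: walk_betw_def)

lemma gdist_neq_0:
  assumes "connected_graph V E" "x \<in> V" "y \<in> V" "x \<noteq> y"
  shows "gdist V E x y \<noteq> 0"
proof
  assume dist_0: "gdist V E x y = 0"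
  obtain p where p: "walk_betw V E x p y"
    using assms unfolding connected_graph_def by blast
  then have "\<exists>n p. walk_betw V E x p y \<and> length p = Suc n"
    by (intro exI[of _ "length p - 1"] exI[of _ p]) (cases p, auto simp: walk_betw_def)
  from LeastI_ex[OF this] dist_0 obtain q where "walk_betw V E x q y" "length q = 1"
    unfolding gdist_def by auto
  then show False
    using assms(4) unfolding walk_betw_def by (cases q) auto
qed

lemma endpoints_subset_resolving_vertices:
  assumes "connected_graph V E" "u \<in> V" "v \<in> V" "u \<noteq> v"
  shows "{u, v} \<subseteq> resolving_vertices V E u v"
  using assms gdist_self[of u V E] gdist_self[of v V E]
    gdist_neq_0[OF assms] gdist_neq_0[OF assms(1,3,2)]
  unfolding resolving_vertices_def resolves_def by auto

lemma finite_resolving_vertices: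
  "connected_graph V E \<Longrightarrow> finite (resolving_vertices V E u v)"
  unfolding connected_graph_def simple_graph_def resolving_vertices_def by auto

lemma resolving_set_meets_resolving_vertices:
  assumes "resolving_set V E R" "u \<in> V" "v \<in> V" "u \<noteq> v"
  shows "R \<inter> resolving_vertices V E u v \<noteq> {}"
  using assms unfolding resolving_set_def resolving_vertices_def by blast

lemma resolving_vertices_eq_if_other_shares_0:
  assumes "connected_graph V E" "u \<in> V" "v \<in> V" "u \<noteq> v"
    and shares_0: "\<forall>w\<in>V - {u, v}. resolving_share V E w u v = 0"
  shows "resolving_vertices V E u v = {u, v}"
proof -
  have "card (resolving_vertices V E u v) \<noteq> 0"
    using endpoints_subset_resolving_vertices[OF assms(1-4)]
      finite_resolving_vertices[OF assms(1)] by auto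
  then have "resolving_share V E w u v \<noteq> 0" if "w \<in> resolving_vertices V E u v" for w
    using that unfolding resolving_share_def resolving_vertices_def by simp
  then have "resolving_vertices V E u v \<subseteq> {u, v}"
    using shares_0 unfolding resolving_vertices_def by blast
  then show ?thesis
    using endpoints_subset_resolving_vertices[OF assms(1-4)] by blast
qed

lemma resolving_vertices_eq_if_share_half:
  assumes "connected_graph V E" "u \<in> V" "v \<in> V" "u \<noteq> v"
    and "resolving_share V E w u v = 1 / 2"
  shows "resolving_vertices V E u v = {u, v}"
proof -
  have "1 / real (card (resolving_vertices V E u v)) = 1 / 2"
    using assms(5) unfolding resolving_share_def by (auto split: if_splits)
  then have "card (resolving_vertices V E u v) = card {u, v}"
    using assms(4) by simp
  then show ?thesis
    using endpoints_subset_resolving_vertices[OF assms(1-4)]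
      finite_resolving_vertices[OF assms(1)]
    by (metis card_subset_eq)
qed

theorem lemma2p9:
  fixes V :: "'a set" and E :: "'a \<Rightarrow> 'a \<Rightarrow> bool" and u v :: 'a and R :: "'a set"
  assumes "connected_graph V E"
    and "u \<in> V" and "v \<in> V" and "u \<noteq> v"
    and "resolving_set V E R"
  shows "((\<forall>w\<in>V - {u, v}. resolving_share V E w u v = 0) \<longrightarrow> u \<in> R \<or> v \<in> R)
       \<and> ((\<exists>w\<in>V. resolving_share V E w u v = 1 / 2) \<longrightarrow> u \<in> R \<or> v \<in> R)"
proof -
  have endpoint_in_R: "u \<in> R \<or> v \<in> R" if "resolving_vertices V E u v = {u, v}"
    using resolving_set_meets_resolving_vertices[OF assms(5,2-4)] that by auto
  show ?thesis
    using endpoint_in_R resolving_vertices_eq_if_other_shares_0[OF assms(1-4)]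
      resolving_vertices_eq_if_share_half[OF assms(1-4)] by blast
qed

end
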